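(* Fix an integer $m>1$ and consider the $(m,m)$ algorithm on the complete graph on $N$ nodes. Let $X(t)$ be the number of nodes in state $1$ at time $t$. Then for every $i\in\{0,1,\ldots,N\}$, $$\mathbb{P}(X(\infty)=N\mid X(0)=i)=\frac{\sum_{k=0}^{i-1}\binom{N-1}{k}^{m-1}}{\sum_{k=0}^{N-1}\binom{N-1}{k}^{m-1}}$$ (an empty sum being $0$). Further, for every $\alpha\in(0,1/2)$ there is a constant $c>0$ not depending on $N$ such that $$h_N(\alpha)\le c\exp\Bigl(-(N-1)(m-1)D\bigl(\alpha;\tfrac12\bigr)\Bigr),$$ where $D(p;\tfrac12)=\log 2-H(p)$ with $H(p)=-p\log p-(1-p)\log(1-p)$, i.e. $D(p;\tfrac12)$ is the Kullback–Leibler divergence of the Bernoulli$(p)$ distribution from the Bernoulli$(1/2)$ distribution. Moreover, the two sides of this inequality are logarithmically equivalent as $N\to\infty$, i.e. $\lim_{N\to\infty}\frac1N\log h_N(\alpha)=-(m-1)D(\alpha;\tfrac12)$.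
   Context: The $(m,d)$ algorithm (integers $1\le d\le m$) on the complete graph on $N$ nodes: each node has a state in $\{0,1\}$ and an independent unit-rate exponential clock (Poisson process of rate 1), independent of all states. At each tick of its clock, a node samples $m$ nodes uniformly at random from all $N$ nodes, with replacement, and observes their current states; if at least $d$ of the sampled nodes have a state different from its own, it switches its state, otherwise it keeps it. The number $X(t)$ of nodes in state 1 is then a continuous-time Markov chain on $\{0,\ldots,N\}$ with rates $q_{n,n+1}=(N-n)\mathbb{P}(\mathrm{Bin}(m,n/N)\ge d)$ and $q_{n,n-1}=n\,\mathbb{P}(\mathrm{Bin}(m,(N-n)/N)\ge d)$; states $0$ and $N$ are absorbing, and $X(\infty)$ denotes the absorbing state eventually reached. The $(m,m)$ algorithm is the case $d=m$. For $\alpha=i/N$, $i\in\{0,\ldots,N\}$, define $h_N(\alpha)=\mathbb{P}(X(\infty)=N\mid X(0)=\lfloor\alpha N\rfloor)$, and for general $\alpha\in[0,1]$ define $h_N(\alpha)=(N\alpha-\lfloor N\alpha\rfloor)h_N(\lceil\alpha N\rceil/N)+(\lceil N\alpha\rceil-N\alpha)h_N(\lfloor\alpha N\rfloor/N)$ (linear interpolation). *)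

theory Defs
  imports "HOL-Probability.Probability"
begin

definition binom_tail :: "nat \<Rightarrow> nat \<Rightarrow> real \<Rightarrow> real" where
  "binom_tail m d p = (\<Sum>j\<in>{d..m}. real (m choose j) * p ^ j * (1 - p) ^ (m - j))"

definition rate_up :: "nat \<Rightarrow> nat \<Rightarrow> nat \<Rightarrow> nat \<Rightarrow> real" where
  "rate_up m d N n = real (N - n) * binom_tail m d (real n / real N)"

definition rate_down :: "nat \<Rightarrow> nat \<Rightarrow> nat \<Rightarrow> nat \<Rightarrow> real" where
  "rate_down m d N n = real n * binom_tail m d (real (N - n) / real N)"

text \<open>One step of the embedded jump chain of the continuous-time chain X(t);
  states 0 and N (and any state with zero total rate) are absorbing.\<close>
definition jump_step :: "nat \<Rightarrow> nat \<Rightarrow> nat \<Rightarrow> nat \<Rightarrow> nat pmf" where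
  "jump_step m d N n =
     (if 0 < n \<and> n < N \<and> rate_up m d N n + rate_down m d N n > 0
      then map_pmf (\<lambda>b. if b then n + 1 else n - 1)
             (bernoulli_pmf (rate_up m d N n / (rate_up m d N n + rate_down m d N n)))
      else return_pmf n)"

fun jump_dist :: "nat \<Rightarrow> nat \<Rightarrow> nat \<Rightarrow> nat \<Rightarrow> nat \<Rightarrow> nat pmf" where
  "jump_dist m d N i 0 = return_pmf i"
| "jump_dist m d N i (Suc k) = bind_pmf (jump_dist m d N i k) (jump_step m d N)"

text \<open>P(X(\<infinity>) = N | X(0) = i): probability that the chain is eventually absorbed in N
  (the limit of the nondecreasing sequence P(Y_k = N)).\<close>
definition absorb_prob :: "nat \<Rightarrow> nat \<Rightarrow> nat \<Rightarrow> nat \<Rightarrow> real" where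
  "absorb_prob m d N i = lim (\<lambda>k. pmf (jump_dist m d N i k) N)"

definition hN :: "nat \<Rightarrow> nat \<Rightarrow> nat \<Rightarrow> real \<Rightarrow> real" where
  "hN m d N \<alpha> =
     (if real N * \<alpha> = of_int \<lfloor>real N * \<alpha>\<rfloor>
      then absorb_prob m d N (nat \<lfloor>real N * \<alpha>\<rfloor>)
      else (real N * \<alpha> - of_int \<lfloor>real N * \<alpha>\<rfloor>) * absorb_prob m d N (nat \<lceil>real N * \<alpha>\<rceil>)
         + (of_int \<lceil>real N * \<alpha>\<rceil> - real N * \<alpha>) * absorb_prob m d N (nat \<lfloor>real N * \<alpha>\<rfloor>))"

definition bin_entropy :: "real \<Rightarrow> real" where
  "bin_entropy p = - p * ln p - (1 - p) * ln (1 - p)"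

definition KL_half :: "real \<Rightarrow> real" where
  "KL_half p = ln 2 - bin_entropy p"

end

theory Submission
  imports Defs
begin

text \<open>For \<open>d = m\<close> the rates satisfy the balance relation
  \<open>u\<^sub>n C(N-1,n)\<^sup>m\<^sup>-\<^sup>1 = d\<^sub>n C(N-1,n-1)\<^sup>m\<^sup>-\<^sup>1\<close>, so the function \<open>f\<close> with increments
  \<open>f(n+1) - f(n) = C(N-1,n)\<^sup>m\<^sup>-\<^sup>1\<close>, normalised by \<open>f 0 = 0\<close> and \<open>f N = 1\<close>, is harmonic for the
  jump chain. Hence \<open>f(Y\<^sub>k)\<close> is a bounded martingale, while \<open>f(Y\<^sub>k)\<^sup>2\<close> gains a fixed positive amount
  in expectation at every interior step; so the expected time spent in the interior is finite
  and the absorption probability at \<open>N\<close> is \<open>f i\<close>.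

  For the asymptotics, \<open>C(N-1,k-1) / C(N-1,k) = k/(N-k) \<le> \<alpha>/(1-\<alpha>)\<close> for \<open>k \<le> \<alpha>N\<close>, so the sum
  defining \<open>f(\<alpha>N)\<close> is dominated by its last term, and \<open>f(\<alpha>N)\<close> lies within polynomial factors of
  \<open>(C(N-1,\<alpha>N) / C(N-1,N/2))\<^sup>m\<^sup>-\<^sup>1\<close>. Comparing \<open>ln C(N-1,k)\<close> with \<open>x ln x + (N-x) ln (N-x)\<close>
  step by step turns this ratio into \<open>exp (-N D(\<alpha>;1/2))\<close> up to bounded factors.\<close>

lemma pmf_bind_finite_support:
  fixes M :: "nat pmf"
  assumes "set_pmf M \<subseteq> {..N}"
  shows "pmf (bind_pmf M g) x = (\<Sum>y\<le>N. pmf M y * pmf (g y) x)"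
  unfolding pmf_bind using assms
  by (subst integral_measure_pmf_real[of "{..N}"]) (auto simp: mult.commute)

lemma set_pmf_jump_step: "n \<le> N \<Longrightarrow> set_pmf (jump_step m d N n) \<subseteq> {..N}"
  by (auto simp: jump_step_def split: if_splits)

lemma set_pmf_jump_dist: "i \<le> N \<Longrightarrow> set_pmf (jump_dist m d N i k) \<subseteq> {..N}"
proof (induction k)
  case (Suc k)
  then show ?case using set_pmf_jump_step[of _ N m d] by fastforce
qed simp

lemma expectation_jump_step_absorbing:
  fixes f :: "nat \<Rightarrow> real"
  shows "\<not> (0 < n \<and> n < N) \<Longrightarrow> measure_pmf.expectation (jump_step m d N n) f = f n"
  by (auto simp: jump_step_def)

lemma expectation_jump_dist_Suc:
  fixes f :: "nat \<Rightarrow> real"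
  assumes "i \<le> N"
  shows "(\<Sum>x\<le>N. pmf (jump_dist m d N i (Suc k)) x * f x)
       = (\<Sum>y\<le>N. pmf (jump_dist m d N i k) y * measure_pmf.expectation (jump_step m d N y) f)"
proof -
  have "(\<Sum>x\<le>N. pmf (jump_dist m d N i (Suc k)) x * f x)
      = (\<Sum>x\<le>N. (\<Sum>y\<le>N. pmf (jump_dist m d N i k) y * pmf (jump_step m d N y) x) * f x)"
    using pmf_bind_finite_support[OF set_pmf_jump_dist[OF assms], of m d k "jump_step m d N"]
    by simp
  also have "\<dots> = (\<Sum>y\<le>N. pmf (jump_dist m d N i k) y * (\<Sum>x\<le>N. f x * pmf (jump_step m d N y) x))"
    unfolding sum_distrib_left sum_distrib_right by (subst sum.swap) (simp add: mult_ac)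
  also have "\<dots> = (\<Sum>y\<le>N. pmf (jump_dist m d N i k) y * measure_pmf.expectation (jump_step m d N y) f)"
    using set_pmf_jump_step[of _ N m d]
    by (intro sum.cong refl) (subst integral_measure_pmf_real[of "{..N}"], auto)
  finally show ?thesis .
qed

lemma jump_dist_martingale:
  fixes f :: "nat \<Rightarrow> real"
  assumes "i \<le> N"
    and harmonic: "\<And>n. 0 < n \<Longrightarrow> n < N \<Longrightarrow> measure_pmf.expectation (jump_step m d N n) f = f n"
  shows "(\<Sum>x\<le>N. pmf (jump_dist m d N i k) x * f x) = f i"
proof (induction k)
  case 0
  then show ?case using assms(1) by (simp add: indicator_def)
next
  case (Suc k)
  have "measure_pmf.expectation (jump_step m d N y) f = f y" for y
    by (cases "0 < y \<and> y < N") (simp_all add: harmonic expectation_jump_step_absorbing)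
  then have "(\<Sum>x\<le>N. pmf (jump_dist m d N i (Suc k)) x * f x) = (\<Sum>y\<le>N. pmf (jump_dist m d N i k) y * f y)"
    unfolding expectation_jump_dist_Suc[OF assms(1)] by simp
  then show ?case using Suc by simp
qed

text \<open>The square of \<open>f\<close> is a submartingale whose expected increment is at least some
  \<open>\<epsilon> > 0\<close> whenever the chain is in the interior; since it is bounded by 1, the expected
  number of interior visits is at most \<open>1/\<epsilon>\<close>.\<close>

lemma summable_interior_mass:
  fixes f :: "nat \<Rightarrow> real"
  assumes i: "i \<le> N" and bounded: "\<And>x. x \<le> N \<Longrightarrow> \<bar>f x\<bar> \<le> 1"
    and spread: "\<And>n. 0 < n \<Longrightarrow> n < N \<Longrightarrow>
                   f n ^ 2 < measure_pmf.expectation (jump_step m d N n) (\<lambda>x. f x ^ 2)"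
  shows "summable (\<lambda>k. \<Sum>x\<in>{0<..<N}. pmf (jump_dist m d N i k) x)"
proof -
  define P where "P k x = pmf (jump_dist m d N i k) x" for k x
  define A where "A k = (\<Sum>x\<in>{0<..<N}. P k x)" for k
  define g where "g y = measure_pmf.expectation (jump_step m d N y) (\<lambda>x. f x ^ 2) - f y ^ 2" for y
  define \<epsilon> where "\<epsilon> = Min (insert 1 (g ` {0<..<N}))"
  have \<epsilon>_pos: "\<epsilon> > 0"
    unfolding \<epsilon>_def using spread by (subst Min_gr_iff) (auto simp: g_def)
  have g_ge: "\<epsilon> * of_bool (y \<in> {0<..<N}) \<le> g y" for y
  proof (cases "y \<in> {0<..<N}")
    case True
    then show ?thesis unfolding \<epsilon>_def by (auto intro: Min_le)
  next
    case False
    then have "\<not> (0 < y \<and> y < N)" by auto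
    then have "g y = 0" by (simp add: g_def expectation_jump_step_absorbing)
    then show ?thesis using False by auto
  qed
  have growth: "f i ^ 2 + \<epsilon> * (\<Sum>t<k. A t) \<le> (\<Sum>x\<le>N. P k x * f x ^ 2)" for k
  proof (induction k)
    case 0
    then show ?case using i by (simp add: P_def indicator_def)
  next
    case (Suc k)
    have interior: "(\<Sum>y\<le>N. P k y * of_bool (y \<in> {0<..<N})) = A k"
      unfolding A_def by (rule sum.mono_neutral_cong_right) auto
    have "f i ^ 2 + \<epsilon> * (\<Sum>t<Suc k. A t) \<le> (\<Sum>y\<le>N. P k y * f y ^ 2) + \<epsilon> * A k"
      using Suc by (simp add: distrib_left)
    also have "\<dots> = (\<Sum>y\<le>N. P k y * (f y ^ 2 + \<epsilon> * of_bool (y \<in> {0<..<N})))"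
      unfolding interior[symmetric]
      by (simp add: algebra_simps sum.distrib sum_distrib_left del: sum_mult_of_bool_eq)
    also have "\<dots> \<le> (\<Sum>y\<le>N. P k y * (f y ^ 2 + g y))"
      using g_ge by (intro sum_mono mult_left_mono) (auto simp: P_def)
    also have "\<dots> = (\<Sum>x\<le>N. P (Suc k) x * f x ^ 2)"
      unfolding P_def g_def by (subst expectation_jump_dist_Suc[OF i]) simp
    finally show ?case .
  qed
  have bounded_square: "(\<Sum>x\<le>N. P k x * f x ^ 2) \<le> 1" for k
  proof -
    have "(\<Sum>x\<le>N. P k x * f x ^ 2) \<le> (\<Sum>x\<le>N. P k x)"
      using bounded by (intro sum_mono mult_right_le_one_le) (auto simp: P_def abs_square_le_1)
    also have "\<dots> \<le> 1"
      unfolding P_def by (metis finite_atMost measure_measure_pmf_finite measure_pmf.prob_le_1)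
    finally show ?thesis .
  qed
  have "\<epsilon> * (\<Sum>t<k. A t) \<le> 1" for k
    using growth[of k] bounded_square[of k] by (smt (verit) zero_le_power2)
  then have "(\<Sum>t<k. A t) \<le> 1 / \<epsilon>" for k
    using \<epsilon>_pos by (simp add: field_simps)
  then show ?thesis
    unfolding A_def P_def by (intro summableI_nonneg_bounded) (auto intro: sum_nonneg)
qed

lemma absorb_prob_eq_harmonic:
  fixes f :: "nat \<Rightarrow> real"
  assumes N: "N \<ge> 1" and i: "i \<le> N"
    and harmonic: "\<And>n. 0 < n \<Longrightarrow> n < N \<Longrightarrow> measure_pmf.expectation (jump_step m d N n) f = f n"
    and f_0: "f 0 = 0" and f_N: "f N = 1" and bounds: "\<And>x. x \<le> N \<Longrightarrow> 0 \<le> f x \<and> f x \<le> 1"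
    and spread: "\<And>n. 0 < n \<Longrightarrow> n < N \<Longrightarrow>
                   f n ^ 2 < measure_pmf.expectation (jump_step m d N n) (\<lambda>x. f x ^ 2)"
  shows "absorb_prob m d N i = f i"
proof -
  define P where "P k x = pmf (jump_dist m d N i k) x" for k x
  define A where "A k = (\<Sum>x\<in>{0<..<N}. P k x)" for k
  have "summable A"
    unfolding A_def P_def using bounds spread by (intro summable_interior_mass[OF i, of f]) auto
  then have A_0: "A \<longlonglongrightarrow> 0" by (rule summable_LIMSEQ_zero)
  have "f i = P k N + (\<Sum>x\<in>{0<..<N}. P k x * f x)" for k
  proof -
    have "{..N} = insert 0 (insert N {0<..<N})" using N by auto
    then show ?thesis
      using jump_dist_martingale[OF i harmonic, of k] N f_0 f_N by (simp add: P_def)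
  qed
  moreover have "0 \<le> (\<Sum>x\<in>{0<..<N}. P k x * f x) \<and> (\<Sum>x\<in>{0<..<N}. P k x * f x) \<le> A k" for k
    unfolding A_def P_def using bounds
    by (auto intro!: sum_nonneg sum_mono mult_right_le_one_le)
  ultimately have sandwich: "f i - A k \<le> P k N \<and> P k N \<le> f i" for k
    by (smt (verit))
  have "(\<lambda>k. P k N) \<longlonglongrightarrow> f i"
  proof (rule tendsto_sandwich[of "\<lambda>k. f i - A k" _ _ "\<lambda>k. f i"])
    show "(\<lambda>k. f i - A k) \<longlonglongrightarrow> f i"
      using tendsto_diff[OF tendsto_const A_0] by simp
  qed (use sandwich in auto)
  then show ?thesis unfolding absorb_prob_def P_def by (rule limI)
qed

lemma binom_tail_self [simp]: "binom_tail m m p = p ^ m"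
  by (simp add: binom_tail_def)

lemma rates_self_pos:
  assumes "0 < n" "n < N"
  shows "rate_up m m N n > 0" "rate_down m m N n > 0"
  using assms by (simp_all add: rate_up_def rate_down_def)

lemma expectation_jump_step_self:
  fixes f :: "nat \<Rightarrow> real" and m :: nat
  assumes "0 < n" "n < N"
  defines "p \<equiv> rate_up m m N n / (rate_up m m N n + rate_down m m N n)"
  shows "measure_pmf.expectation (jump_step m m N n) f = p * f (n + 1) + (1 - p) * f (n - 1)"
    and "0 < p" "p < 1"
proof -
  note rates = rates_self_pos[OF assms(1,2), of m]
  show "0 < p" "p < 1" using rates by (simp_all add: p_def field_simps)
  then show "measure_pmf.expectation (jump_step m m N n) f = p * f (n + 1) + (1 - p) * f (n - 1)"
    using rates assms(1,2) by (simp add: jump_step_def p_def[symmetric] mult.commute)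
qed

lemma binomial_ratio: "0 < k \<Longrightarrow> k * (n choose k) = (Suc n - k) * (n choose (k - 1))"
proof -
  assume "0 < k"
  then obtain j where j: "k = Suc j" by (cases k) auto
  have "Suc j * (n choose Suc j) = n * ((n - 1) choose j)" by (rule binomial_absorption)
  also have "\<dots> = (n - j) * (n choose j)" by (rule binomial_absorb_comp[symmetric])
  finally show ?thesis using j by simp
qed

abbreviation choose_pred :: "nat \<Rightarrow> nat \<Rightarrow> real" where
  "choose_pred N k \<equiv> real ((N - 1) choose k)"

lemma real_binomial_ratio:
  assumes "0 < k" "k < N"
  shows "real k * choose_pred N k = real (N - k) * choose_pred N (k - 1)"
proof -
  have "Suc (N - 1) - k = N - k" using assms by simp
  then show ?thesis using binomial_ratio[OF assms(1), of "N - 1"] by (metis of_nat_mult)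
qed

lemma rates_self_balance:
  assumes "0 < n" "n < N" "m > 0"
  shows "rate_up m m N n * choose_pred N n ^ (m - 1)
       = rate_down m m N n * choose_pred N (n - 1) ^ (m - 1)"
proof -
  obtain j where j: "m = Suc j" using assms by (cases m) auto
  have "rate_up m m N n * choose_pred N n ^ (m - 1)
      = real (N - n) * real n * (real n * choose_pred N n) ^ j / real N ^ m"
    by (simp add: rate_up_def j power_divide power_mult_distrib)
  also have "\<dots> = real (N - n) * real n * (real (N - n) * choose_pred N (n - 1)) ^ j / real N ^ m"
    using real_binomial_ratio[OF assms(1,2)] by simp
  also have "\<dots> = rate_down m m N n * choose_pred N (n - 1) ^ (m - 1)"
    using assms by (simp add: rate_down_def j power_divide power_mult_distrib of_nat_diff)
  finally show ?thesis .
qed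

definition choose_pow_sum :: "nat \<Rightarrow> nat \<Rightarrow> nat \<Rightarrow> real" where
  "choose_pow_sum m N x = (\<Sum>k<x. choose_pred N k ^ (m - 1))"

definition absorb_formula :: "nat \<Rightarrow> nat \<Rightarrow> nat \<Rightarrow> real" where
  "absorb_formula m N x = choose_pow_sum m N x / choose_pow_sum m N N"

lemma choose_pow_sum_Suc:
  "choose_pow_sum m N (Suc x) = choose_pow_sum m N x + choose_pred N x ^ (m - 1)"
  by (simp add: choose_pow_sum_def)

lemma choose_pow_sum_nonneg: "choose_pow_sum m N x \<ge> 0"
  unfolding choose_pow_sum_def by (auto intro: sum_nonneg)

lemma choose_pow_sum_mono: "x \<le> y \<Longrightarrow> choose_pow_sum m N x \<le> choose_pow_sum m N y"
  unfolding choose_pow_sum_def by (rule sum_mono2) auto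

lemma choose_pow_sum_pos: "0 < x \<Longrightarrow> choose_pow_sum m N x > 0"
  using choose_pow_sum_mono[of 1 x m N] by (simp add: choose_pow_sum_def)

lemma choose_pow_sum_beyond:
  assumes "m > 1" "N \<ge> 1" "N \<le> x"
  shows "choose_pow_sum m N x = choose_pow_sum m N N"
proof -
  have "choose_pow_sum m N x = choose_pow_sum m N N + (\<Sum>k\<in>{N..<x}. choose_pred N k ^ (m - 1))"
    unfolding choose_pow_sum_def using assms(3)
    by (metis atLeast0LessThan sum.atLeastLessThan_concat zero_le)
  also have "(\<Sum>k\<in>{N..<x}. choose_pred N k ^ (m - 1)) = 0"
    using assms(1,2) by (intro sum.neutral) auto
  finally show ?thesis by simp
qed

lemma absorb_formula_0: "absorb_formula m N 0 = 0"
  by (simp add: absorb_formula_def choose_pow_sum_def)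

lemma absorb_formula_N: "N \<ge> 1 \<Longrightarrow> absorb_formula m N N = 1"
  using choose_pow_sum_pos[of N m N] by (simp add: absorb_formula_def)

lemma absorb_formula_mono:
  "x \<le> y \<Longrightarrow> absorb_formula m N x \<le> absorb_formula m N y"
  unfolding absorb_formula_def
  by (intro divide_right_mono choose_pow_sum_mono choose_pow_sum_nonneg)

lemma absorb_formula_bounds:
  assumes "m > 1" "N \<ge> 1"
  shows "0 \<le> absorb_formula m N x \<and> absorb_formula m N x \<le> 1"
proof -
  have "absorb_formula m N x \<le> absorb_formula m N (max x N)"
    by (rule absorb_formula_mono) simp
  also have "\<dots> = 1"
    using choose_pow_sum_beyond[OF assms, of "max x N"] absorb_formula_N[OF assms(2)]
    by (simp add: absorb_formula_def)
  finally show ?thesis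
    using absorb_formula_mono[of 0 x m N] by (simp add: absorb_formula_0)
qed

lemma absorb_formula_strict_step:
  assumes "N \<ge> 1" "0 < n" "n < N"
  shows "absorb_formula m N (n - 1) < absorb_formula m N (n + 1)"
proof -
  have "n \<le> N - 1" using assms(3) by simp
  then have "choose_pow_sum m N (n - 1) < choose_pow_sum m N (n - 1) + choose_pred N n ^ (m - 1)"
    by simp
  also have "\<dots> \<le> choose_pow_sum m N (n + 1)"
    using assms(2) choose_pow_sum_Suc[of m N "n - 1"] choose_pow_sum_Suc[of m N n] by simp
  finally show ?thesis
    using choose_pow_sum_pos[of N m N] assms by (simp add: absorb_formula_def divide_strict_right_mono)
qed

lemma absorb_formula_harmonic:
  assumes "m > 1" "N \<ge> 1" "0 < n" "n < N"
  shows "measure_pmf.expectation (jump_step m m N n) (absorb_formula m N) = absorb_formula m N n"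
proof -
  let ?u = "rate_up m m N n" and ?d = "rate_down m m N n" and ?S = "choose_pow_sum m N"
  note rates = rates_self_pos[OF assms(3,4), of m]
  have up: "?S (n + 1) = ?S n + choose_pred N n ^ (m - 1)"
    by (simp add: choose_pow_sum_Suc)
  have down: "?S n = ?S (n - 1) + choose_pred N (n - 1) ^ (m - 1)"
    using assms(3) choose_pow_sum_Suc[of m N "n - 1"] by simp
  have balance: "?u * ?S (n + 1) + ?d * ?S (n - 1) = (?u + ?d) * ?S n"
    using up down rates_self_balance[OF assms(3,4)] assms(1) by (simp add: algebra_simps)
  have "measure_pmf.expectation (jump_step m m N n) (absorb_formula m N)
      = (?u * ?S (n + 1) + ?d * ?S (n - 1)) / ((?u + ?d) * ?S N)"
    using rates choose_pow_sum_pos[of N m N] assms(2)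
    by (simp add: expectation_jump_step_self[OF assms(3,4)] absorb_formula_def field_simps
        add_divide_distrib[symmetric])
  also have "\<dots> = absorb_formula m N n"
    using rates unfolding balance absorb_formula_def by simp
  finally show ?thesis .
qed

lemma variance_two_point:
  "(a::real)^2 * p + b^2 * (1 - p) - (a * p + b * (1 - p))^2 = p * (1 - p) * (a - b)^2"
  by (simp add: power2_eq_square algebra_simps)

lemma absorb_formula_spread:
  assumes "m > 1" "N \<ge> 1" "0 < n" "n < N"
  shows "absorb_formula m N n ^ 2
       < measure_pmf.expectation (jump_step m m N n) (\<lambda>x. absorb_formula m N x ^ 2)"
proof -
  let ?f = "absorb_formula m N"
  let ?p = "rate_up m m N n / (rate_up m m N n + rate_down m m N n)"
  note step = expectation_jump_step_self[OF assms(3,4), of m]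
  have "?f n = ?p * ?f (n + 1) + (1 - ?p) * ?f (n - 1)"
    using absorb_formula_harmonic[OF assms] step(1) by simp
  moreover have "0 < ?p * (1 - ?p) * (?f (n + 1) - ?f (n - 1)) ^ 2"
    using step(2,3) absorb_formula_strict_step[OF assms(2-4), of m] by (intro mult_pos_pos) auto
  ultimately show ?thesis
    using step(1)[of "\<lambda>x. ?f x ^ 2"] variance_two_point[of "?f (n + 1)" ?p "?f (n - 1)"]
    by (simp add: mult.commute)
qed

lemma absorb_prob_self:
  assumes "m > 1" "N \<ge> 1" "i \<le> N"
  shows "absorb_prob m m N i = absorb_formula m N i"
  using absorb_formula_bounds[OF assms(1,2)]
  by (intro absorb_prob_eq_harmonic assms(2,3) absorb_formula_harmonic absorb_formula_spread
        absorb_formula_0 absorb_formula_N) (use assms in auto)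

lemma KL_half_expand: "KL_half p = ln 2 + p * ln p + (1 - p) * ln (1 - p)"
  by (simp add: KL_half_def bin_entropy_def algebra_simps)

lemma KL_half_ge_tangent:
  assumes "0 < p" "p < 1" "0 < a" "a < 1"
  shows "KL_half a + ln (a / (1 - a)) * (p - a) \<le> KL_half p"
proof -
  have "p * (ln a - ln p) \<le> a - p"
    using ln_diff_le[of a p] assms by (simp add: field_simps)
  moreover have "(1 - p) * (ln (1 - a) - ln (1 - p)) \<le> (1 - a) - (1 - p)"
    using ln_diff_le[of "1 - a" "1 - p"] assms by (simp add: field_simps)
  moreover have "KL_half p - KL_half a - ln (a / (1 - a)) * (p - a)
      = p * (ln p - ln a) + (1 - p) * (ln (1 - p) - ln (1 - a))"
    using assms by (simp add: KL_half_expand ln_div algebra_simps)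
  ultimately show ?thesis by (simp add: algebra_simps)
qed

lemma KL_half_nonneg: "0 < p \<Longrightarrow> p < 1 \<Longrightarrow> KL_half p \<ge> 0"
  using KL_half_ge_tangent[of p "1/2"] by (simp add: KL_half_expand ln_div)

lemma KL_half_le_square:
  assumes "0 < q" "q < 1"
  shows "KL_half q \<le> (2 * q - 1) ^ 2"
proof -
  have "ln (2 * q) = ln 2 + ln q" "ln (2 * (1 - q)) = ln 2 + ln (1 - q)"
    using assms ln_mult[of 2 q] ln_mult[of 2 "1 - q"] by simp_all
  then have "KL_half q = q * ln (2 * q) + (1 - q) * ln (2 * (1 - q))"
    by (simp add: KL_half_expand algebra_simps)
  also have "\<dots> \<le> q * (2 * q - 1) + (1 - q) * (2 * (1 - q) - 1)"
    using assms ln_le_minus_one[of "2 * q"] ln_le_minus_one[of "2 * (1 - q)"]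
    by (intro add_mono mult_left_mono) auto
  also have "\<dots> = (2 * q - 1) ^ 2" by (simp add: power2_eq_square algebra_simps)
  finally show ?thesis .
qed

text \<open>By Stirling's formula \<open>ln C(N,x) = N ln N - xlnx_sum N x + O(ln N)\<close>; for ratios of binomial
  coefficients the comparison is made step by step with elementary bounds on \<open>ln\<close>.\<close>

definition xlnx_sum :: "real \<Rightarrow> real \<Rightarrow> real" where
  "xlnx_sum N x = x * ln x + (N - x) * ln (N - x)"

lemma xlnx_sum_eq_KL_half:
  assumes "0 < x" "x < N"
  shows "xlnx_sum N x = N * ln N - N * ln 2 + N * KL_half (x / N)"
proof -
  have N: "N > 0" using assms by simp
  have "1 - x / N = (N - x) / N" using N by (simp add: field_simps)
  then have "N * KL_half (x / N) = N * ln 2 + x * (ln x - ln N) + (N - x) * (ln (N - x) - ln N)"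
    using assms N by (simp add: KL_half_expand ln_div field_simps)
  then show ?thesis by (simp add: xlnx_sum_def algebra_simps)
qed

lemma xlnx_sum_step_ge:
  assumes "1 \<le> j" "j + 1 < N"
  shows "ln (j / (N - j)) \<le> xlnx_sum N (j + 1) - xlnx_sum N j"
proof -
  have "(j + 1) * (ln j - ln (j + 1)) \<le> -1"
    using ln_diff_le[of j "j + 1"] assms by (simp add: field_simps)
  moreover have "(N - j - 1) * (ln (N - j) - ln (N - j - 1)) \<le> 1"
    using ln_diff_le[of "N - j" "N - j - 1"] assms by (simp add: field_simps)
  moreover have "xlnx_sum N (j + 1) - xlnx_sum N j - ln (j / (N - j))
      = - ((j + 1) * (ln j - ln (j + 1))) - (N - j - 1) * (ln (N - j) - ln (N - j - 1))"
    using assms by (simp add: xlnx_sum_def ln_div algebra_simps)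
  ultimately show ?thesis by linarith
qed

lemma xlnx_sum_step_le:
  assumes "2 \<le> j" "j < N"
  shows "xlnx_sum N j - xlnx_sum N (j - 1) \<le> ln (j / (N - j))"
proof -
  have "(j - 1) * (ln j - ln (j - 1)) \<le> 1"
    using ln_diff_le[of j "j - 1"] assms by (simp add: field_simps)
  moreover have "(N - j + 1) * (ln (N - j) - ln (N - j + 1)) \<le> -1"
    using ln_diff_le[of "N - j" "N - j + 1"] assms by (simp add: field_simps)
  moreover have "xlnx_sum N j - xlnx_sum N (j - 1) - ln (j / (N - j))
      = (j - 1) * (ln j - ln (j - 1)) + (N - j + 1) * (ln (N - j) - ln (N - j + 1))"
    using assms by (simp add: xlnx_sum_def ln_div algebra_simps)
  ultimately show ?thesis by linarith
qed

lemma ln_choose_pred_ratio: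
  assumes "1 \<le> j" "j < N"
  shows "ln (choose_pred N (j - 1)) - ln (choose_pred N j) = ln (real j / (real N - real j))"
proof -
  have "choose_pred N (j - 1) > 0" "choose_pred N j > 0" using assms by simp_all
  then have "ln (choose_pred N (j - 1)) - ln (choose_pred N j)
      = ln (choose_pred N (j - 1) / choose_pred N j)"
    by (simp add: ln_div)
  also have "choose_pred N (j - 1) / choose_pred N j = real j / (real N - real j)"
    using real_binomial_ratio[of j N] assms by (simp add: field_simps of_nat_diff)
  finally show ?thesis .
qed

lemma ln_choose_pred_decrease_le:
  assumes "K \<le> M"
  shows "M + 1 < N \<Longrightarrow>
    ln (choose_pred N K) - ln (choose_pred N M) \<le> xlnx_sum N (real M + 1) - xlnx_sum N (real K + 1)"
  using assms
proof (induction M rule: dec_induct)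
  case (step n)
  have "ln (choose_pred N n) - ln (choose_pred N (Suc n)) \<le> xlnx_sum N (real (Suc n) + 1) - xlnx_sum N (real (Suc n))"
    using ln_choose_pred_ratio[of "Suc n" N] xlnx_sum_step_ge[of "real (Suc n)" "real N"] step.prems
    by simp
  then show ?case using step by (simp add: add.commute)
qed simp

lemma ln_choose_pred_decrease_ge:
  assumes "1 \<le> K" "K \<le> M"
  shows "M < N \<Longrightarrow>
    xlnx_sum N (real M) - xlnx_sum N (real K) \<le> ln (choose_pred N K) - ln (choose_pred N M)"
  using assms(2)
proof (induction M rule: dec_induct)
  case (step n)
  have "xlnx_sum N (real (Suc n)) - xlnx_sum N (real n) \<le> ln (choose_pred N n) - ln (choose_pred N (Suc n))"
    using ln_choose_pred_ratio[of "Suc n" N] xlnx_sum_step_le[of "real (Suc n)" "real N"]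
      step.prems step.hyps assms(1) by simp
  then show ?case using step by simp
qed simp

lemma choose_pow_sum_le_geometric:
  assumes m: "m > 1" and r: "0 \<le> r" "r < 1"
    and ratio: "\<And>k. 1 \<le> k \<Longrightarrow> k \<le> K \<Longrightarrow> choose_pred N (k - 1) \<le> r * choose_pred N k"
  shows "choose_pow_sum m N (K + 1) \<le> choose_pred N K ^ (m - 1) / (1 - r)"
  using ratio
proof (induction K)
  case 0
  have "1 \<le> 1 / (1 - r)" using r by (simp add: field_simps)
  then show ?case by (simp add: choose_pow_sum_def)
next
  case (Suc K)
  let ?B = "choose_pred N (Suc K) ^ (m - 1)"
  have IH: "choose_pow_sum m N (K + 1) \<le> choose_pred N K ^ (m - 1) / (1 - r)"
    using Suc by simp
  have "choose_pred N K ^ (m - 1) \<le> (r * choose_pred N (Suc K)) ^ (m - 1)"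
    using Suc.prems[of "Suc K"] by (intro power_mono) auto
  also have "\<dots> \<le> r * ?B"
    using power_decreasing[of 1 "m - 1" r] m r by (simp add: power_mult_distrib mult_right_mono)
  finally have "choose_pow_sum m N (K + 1) \<le> r * ?B / (1 - r)"
    using IH divide_right_mono[of _ _ "1 - r"] r by (meson diff_ge_0_iff_ge less_imp_le order_trans)
  then have "choose_pow_sum m N (Suc K + 1) \<le> r * ?B / (1 - r) + ?B"
    by (simp add: choose_pow_sum_Suc)
  also have "\<dots> = ?B / (1 - r)" using r by (simp add: field_simps)
  finally show ?case .
qed

lemma hN_between:
  assumes m: "m > 1" and N: "N \<ge> 1" and \<alpha>: "0 < \<alpha>" "\<alpha> < 1"
  shows "absorb_formula m N (nat \<lfloor>real N * \<alpha>\<rfloor>) \<le> hN m m N \<alpha>"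
    and "hN m m N \<alpha> \<le> absorb_formula m N (nat \<lceil>real N * \<alpha>\<rceil>)"
proof -
  let ?x = "real N * \<alpha>" and ?f = "absorb_formula m N"
  have "?x < real N" using \<alpha> N by simp
  then have le_N: "nat \<lceil>?x\<rceil> \<le> N" "nat \<lfloor>?x\<rfloor> \<le> N" by linarith+
  have mono: "?f (nat \<lfloor>?x\<rfloor>) \<le> ?f (nat \<lceil>?x\<rceil>)"
    by (intro absorb_formula_mono nat_mono floor_le_ceiling)
  have absorb: "absorb_prob m m N i = ?f i" if "i \<le> N" for i
    by (rule absorb_prob_self[OF m N that])
  have "?f (nat \<lfloor>?x\<rfloor>) \<le> hN m m N \<alpha> \<and> hN m m N \<alpha> \<le> ?f (nat \<lceil>?x\<rceil>)"
  proof (cases "?x = of_int \<lfloor>?x\<rfloor>")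
    case True
    then have "\<lceil>?x\<rceil> = \<lfloor>?x\<rfloor>" by (metis ceiling_of_int)
    then show ?thesis using True absorb[OF le_N(2)] by (simp add: hN_def)
  next
    case False
    define w where "w = ?x - of_int \<lfloor>?x\<rfloor>"
    have w: "0 \<le> w" "w \<le> 1" unfolding w_def by linarith+
    have "\<lceil>?x\<rceil> = \<lfloor>?x\<rfloor> + 1" using False by (simp add: ceiling_altdef)
    then have "hN m m N \<alpha> = w * ?f (nat \<lceil>?x\<rceil>) + (1 - w) * ?f (nat \<lfloor>?x\<rfloor>)"
      using False absorb[OF le_N(1)] absorb[OF le_N(2)] unfolding hN_def w_def
      by (simp add: algebra_simps)
    moreover have "0 \<le> w * (?f (nat \<lceil>?x\<rceil>) - ?f (nat \<lfloor>?x\<rfloor>))"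
      "0 \<le> (1 - w) * (?f (nat \<lceil>?x\<rceil>) - ?f (nat \<lfloor>?x\<rfloor>))"
      using mono w by simp_all
    ultimately show ?thesis by (simp add: algebra_simps)
  qed
  then show "?f (nat \<lfloor>?x\<rfloor>) \<le> hN m m N \<alpha>" "hN m m N \<alpha> \<le> ?f (nat \<lceil>?x\<rceil>)" by auto
qed

lemma hN_le_1:
  assumes "m > 1" "N \<ge> 1" "0 < \<alpha>" "\<alpha> < 1"
  shows "hN m m N \<alpha> \<le> 1"
  using hN_between(2)[OF assms] absorb_formula_bounds[OF assms(1,2)] by (meson order_trans)

lemma choose_pred_geometric:
  assumes "0 < \<alpha>" "\<alpha> < 1" "0 < k" "k < N" "real k \<le> \<alpha> * real N"
  shows "choose_pred N (k - 1) \<le> \<alpha> / (1 - \<alpha>) * choose_pred N k"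
proof -
  have gap: "real (N - k) > 0" using assms by simp
  have "choose_pred N (k - 1) = real k / real (N - k) * choose_pred N k"
    using real_binomial_ratio[OF assms(3,4)] gap by (simp add: field_simps)
  also have "\<dots> \<le> \<alpha> / (1 - \<alpha>) * choose_pred N k"
  proof (intro mult_right_mono)
    have "real k * (1 - \<alpha>) \<le> \<alpha> * real (N - k)"
      using assms by (simp add: of_nat_diff algebra_simps)
    then show "real k / real (N - k) \<le> \<alpha> / (1 - \<alpha>)"
      using gap assms(2) by (simp add: divide_simps mult.commute)
  qed simp
  finally show ?thesis .
qed

text \<open>The factor \<open>1/(1 - r)\<close>, \<open>r = \<alpha>/(1-\<alpha>)\<close>, bounds the geometric sum; the factor
  \<open>(e/r)\<^sup>m\<^sup>-\<^sup>1\<close> absorbs the rounding of \<open>\<alpha>N\<close> and of \<open>N/2\<close> to integers.\<close>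

definition upper_const :: "nat \<Rightarrow> real \<Rightarrow> real" where
  "upper_const m \<alpha> = exp ((real m - 1) * (1 - ln (\<alpha> / (1 - \<alpha>)))) / (1 - \<alpha> / (1 - \<alpha>))"

lemma upper_const_pos: "0 < \<alpha> \<Longrightarrow> \<alpha> < 1/2 \<Longrightarrow> upper_const m \<alpha> > 0"
  by (simp add: upper_const_def field_simps)

lemma KL_half_central:
  assumes "N \<ge> 2"
  shows "real N * KL_half ((real ((N - 1) div 2) + 1) / real N) \<le> 1"
proof -
  define M where "M = (N - 1) div 2"
  define q where "q = (real M + 1) / real N"
  have "real N \<le> 2 * real M + 2" "2 * real M + 2 \<le> real N + 1"
    unfolding M_def using assms by linarith+
  then have "\<bar>2 * real M + 2 - real N\<bar> \<le> 1" by linarith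
  then have deviation: "(2 * real M + 2 - real N) ^ 2 \<le> 1"
    by (simp add: abs_square_le_1)
  have q: "0 < q" "q < 1"
    using assms unfolding q_def M_def by (simp_all add: field_simps)
  have "real N * KL_half q \<le> real N * (2 * q - 1) ^ 2"
    using KL_half_le_square[OF q] by (simp add: mult_left_mono)
  also have "\<dots> = (2 * real M + 2 - real N) ^ 2 / real N"
    using assms by (simp add: q_def field_simps power2_eq_square)
  also have "\<dots> \<le> 1" using deviation assms by (simp add: divide_le_eq)
  finally show ?thesis unfolding q_def M_def .
qed

lemma ln_choose_pred_ratio_upper:
  assumes \<alpha>: "0 < \<alpha>" "\<alpha> < 1/2" and N: "N \<ge> 3" "real N * (1/2 - \<alpha>) \<ge> 2"
  defines "K \<equiv> nat \<lceil>real N * \<alpha>\<rceil> - 1" and "M \<equiv> (N - 1) div 2"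
  shows "K \<le> M" "M + 1 < N"
    and "ln (choose_pred N K) - ln (choose_pred N M) \<le> 1 - real N * KL_half \<alpha> - ln (\<alpha> / (1 - \<alpha>))"
proof -
  define x where "x = real N * \<alpha>"
  have "0 < x" using \<alpha> N by (simp add: x_def)
  then have "real K + 1 = of_int \<lceil>x\<rceil>"
    unfolding K_def x_def[symmetric] by linarith
  then have x: "x \<le> real K + 1" "real K + 1 < x + 1" by linarith+
  have "real N \<le> 2 * real M + 2" unfolding M_def by linarith
  then show KM: "K \<le> M" "M + 1 < N" using x N unfolding M_def x_def by (auto simp: algebra_simps)
  have central: "real N * KL_half ((real M + 1) / real N) \<le> 1"
    unfolding M_def using N by (intro KL_half_central) auto
  have "real N * KL_half \<alpha> + ln (\<alpha> / (1 - \<alpha>)) \<le> real N * KL_half ((real K + 1) / real N)"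
  proof -
    have p: "0 < (real K + 1) / real N" "(real K + 1) / real N < 1" using KM by (simp_all add: field_simps)
    have "KL_half \<alpha> + ln (\<alpha> / (1 - \<alpha>)) * ((real K + 1) / real N - \<alpha>) \<le> KL_half ((real K + 1) / real N)"
      using KL_half_ge_tangent[OF p] \<alpha> by simp
    then have "real N * KL_half \<alpha> + ln (\<alpha> / (1 - \<alpha>)) * (real K + 1 - x) \<le> real N * KL_half ((real K + 1) / real N)"
      using N by (simp add: x_def field_simps mult_left_mono)
    moreover have "ln (\<alpha> / (1 - \<alpha>)) \<le> ln (\<alpha> / (1 - \<alpha>)) * (real K + 1 - x)"
      using x \<alpha> by (intro mult_le_cancel_left1[THEN iffD2]) (simp add: field_simps)
    ultimately show ?thesis by linarith
  qed
  moreover have "ln (choose_pred N K) - ln (choose_pred N M)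
      \<le> real N * KL_half ((real M + 1) / real N) - real N * KL_half ((real K + 1) / real N)"
    using ln_choose_pred_decrease_le[OF KM] KM xlnx_sum_eq_KL_half[of "real M + 1" "real N"]
      xlnx_sum_eq_KL_half[of "real K + 1" "real N"] by simp
  ultimately show "ln (choose_pred N K) - ln (choose_pred N M) \<le> 1 - real N * KL_half \<alpha> - ln (\<alpha> / (1 - \<alpha>))"
    using central by linarith
qed

lemma hN_upper:
  assumes m: "m > 1" and \<alpha>: "0 < \<alpha>" "\<alpha> < 1/2" and N: "N \<ge> 3" "real N * (1/2 - \<alpha>) \<ge> 2"
  shows "hN m m N \<alpha> \<le> upper_const m \<alpha> * exp (- (real N - 1) * (real m - 1) * KL_half \<alpha>)"
proof -
  define r where "r = \<alpha> / (1 - \<alpha>)"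
  have r: "0 < r" "r < 1" using \<alpha> by (simp_all add: r_def field_simps)
  define K where "K = nat \<lceil>real N * \<alpha>\<rceil> - 1"
  define M where "M = (N - 1) div 2"
  note KM = ln_choose_pred_ratio_upper[OF \<alpha> N, folded K_def M_def r_def]
  have K: "K + 1 = nat \<lceil>real N * \<alpha>\<rceil>" "real K < real N * \<alpha>"
    using \<alpha> N unfolding K_def by (simp_all add: Suc_le_eq) linarith
  have pos: "choose_pred N K > 0" "choose_pred N M > 0" using KM by simp_all
  define R where "R = choose_pred N K / choose_pred N M"
  have "hN m m N \<alpha> \<le> absorb_formula m N (K + 1)"
    unfolding K(1) using \<alpha> N by (intro hN_between(2)[OF m]) auto
  also have "\<dots> \<le> (choose_pred N K ^ (m - 1) / (1 - r)) / choose_pred N M ^ (m - 1)"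
  proof -
    have "choose_pow_sum m N (K + 1) \<le> choose_pred N K ^ (m - 1) / (1 - r)"
      using choose_pred_geometric[OF \<alpha>(1) _ _ _ , of _ N] K KM \<alpha>
      by (intro choose_pow_sum_le_geometric[OF m less_imp_le[OF r(1)] r(2)])
        (auto simp: r_def mult.commute)
    moreover have "choose_pred N M ^ (m - 1) \<le> choose_pow_sum m N N"
      using choose_pow_sum_mono[of "Suc M" N m N] KM choose_pow_sum_nonneg[of m N M]
      by (simp add: choose_pow_sum_Suc)
    ultimately show ?thesis
      unfolding absorb_formula_def using pos r choose_pow_sum_nonneg
      by (intro frac_le) auto
  qed
  also have "\<dots> = exp (real (m - 1) * ln R) / (1 - r)"
    using pos by (simp add: R_def power_divide exp_of_nat_mult)
  also have "\<dots> \<le> exp ((real m - 1) * (1 - ln r) + - (real N - 1) * (real m - 1) * KL_half \<alpha>) / (1 - r)"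
  proof (intro divide_right_mono exp_mono)
    have D: "0 \<le> KL_half \<alpha>" using KL_half_nonneg \<alpha> by simp
    have "real (m - 1) * ln R \<le> (real m - 1) * (1 - real N * KL_half \<alpha> - ln r)"
      using KM(3) pos m by (simp add: R_def ln_div of_nat_diff mult_left_mono)
    also have "\<dots> \<le> (real m - 1) * (1 - ln r) + - (real N - 1) * (real m - 1) * KL_half \<alpha>"
      using m D mult_left_mono[of 1 "real m" "KL_half \<alpha>"] by (simp add: algebra_simps)
    finally show "real (m - 1) * ln R \<le> (real m - 1) * (1 - ln r) + - (real N - 1) * (real m - 1) * KL_half \<alpha>" .
  qed (use r in simp)
  also have "\<dots> = upper_const m \<alpha> * exp (- (real N - 1) * (real m - 1) * KL_half \<alpha>)"
    unfolding upper_const_def r_def exp_add by simp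
  finally show ?thesis .
qed

lemma choose_pow_sum_le_central: "choose_pow_sum m N N \<le> real N * choose_pred N ((N - 1) div 2) ^ (m - 1)"
proof -
  have "choose_pow_sum m N N \<le> (\<Sum>k<N. choose_pred N ((N - 1) div 2) ^ (m - 1))"
    unfolding choose_pow_sum_def by (intro sum_mono power_mono) (auto simp: binomial_maximum)
  then show ?thesis by simp
qed

lemma hN_lower:
  assumes m: "m > 1" and \<alpha>: "0 < \<alpha>" "\<alpha> < 1/2"
    and N: "N \<ge> 3" "real N * (1/2 - \<alpha>) \<ge> 2" "real N * \<alpha> \<ge> 2"
  shows "exp (- (real m - 1) * real N * KL_half (real (nat \<lfloor>real N * \<alpha>\<rfloor> - 1) / real N)) / real N
    \<le> hN m m N \<alpha>"
proof -
  define K where "K = nat \<lfloor>real N * \<alpha>\<rfloor> - 1"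
  define M where "M = (N - 1) div 2"
  have K: "1 \<le> K" "K + 1 = nat \<lfloor>real N * \<alpha>\<rfloor>" "real K < real N * \<alpha>"
    using N unfolding K_def by linarith+
  have KM: "K \<le> M" "M < N" using K N unfolding M_def by (auto simp: algebra_simps)
  have pos: "choose_pred N K > 0" "choose_pred N M > 0" using KM by simp_all
  define R where "R = choose_pred N K / choose_pred N M"
  have "ln R \<ge> - real N * KL_half (real K / real N)"
  proof -
    have "0 \<le> real N * KL_half (real M / real N)"
      using K KM by (intro mult_nonneg_nonneg KL_half_nonneg) auto
    moreover have "xlnx_sum N (real M) - xlnx_sum N (real K) \<le> ln R"
      using ln_choose_pred_decrease_ge[OF K(1) KM] pos by (simp add: R_def ln_div)
    ultimately show ?thesis using K KM by (simp add: xlnx_sum_eq_KL_half)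
  qed
  then have "(real m - 1) * (- real N * KL_half (real K / real N)) \<le> (real m - 1) * ln R"
    using m by (intro mult_left_mono) auto
  then have "exp (- (real m - 1) * real N * KL_half (real K / real N)) \<le> exp (real (m - 1) * ln R)"
    using m by (simp add: of_nat_diff algebra_simps)
  also have "\<dots> = choose_pred N K ^ (m - 1) / choose_pred N M ^ (m - 1)"
    using pos by (simp add: R_def power_divide exp_of_nat_mult)
  finally have "exp (- (real m - 1) * real N * KL_half (real K / real N)) / real N
      \<le> choose_pred N K ^ (m - 1) / (real N * choose_pred N M ^ (m - 1))"
    using N by (simp add: divide_right_mono field_simps)
  also have "\<dots> \<le> absorb_formula m N (K + 1)"
    unfolding absorb_formula_def
    using choose_pow_sum_Suc[of m N K] choose_pow_sum_nonneg[of m N K] N pos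
      choose_pow_sum_pos[of N m N] choose_pow_sum_le_central[of m N, folded M_def]
    by (intro frac_le) auto
  also have "\<dots> \<le> hN m m N \<alpha>"
    unfolding K(2) using \<alpha> N by (intro hN_between(1)[OF m]) auto
  finally show ?thesis unfolding K_def .
qed

lemma eventually_hN_regime:
  assumes "0 < \<alpha>" "\<alpha> < 1/2"
  shows "eventually (\<lambda>N. N \<ge> 3 \<and> real N * (1/2 - \<alpha>) \<ge> 2 \<and> real N * \<alpha> \<ge> 2) sequentially"
proof -
  have large: "eventually (\<lambda>N. c \<le> real N) sequentially" for c :: real
    using filterlim_real_sequentially by (simp add: filterlim_at_top)
  show ?thesis
    using large[of 3] large[of "2 / (1/2 - \<alpha>)"] large[of "2 / \<alpha>"]
  proof eventually_elim
    case (elim N)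
    then show ?case using assms by (simp add: field_simps)
  qed
qed

lemma hN_exp_bound:
  assumes m: "m > 1" and \<alpha>: "0 < \<alpha>" "\<alpha> < 1/2"
  shows "\<exists>c>0. \<forall>N. N \<ge> 1 \<longrightarrow> hN m m N \<alpha> \<le> c * exp (- (real N - 1) * (real m - 1) * KL_half \<alpha>)"
proof -
  obtain N0 where N0: "\<And>N. N \<ge> N0 \<Longrightarrow> N \<ge> 3 \<and> real N * (1/2 - \<alpha>) \<ge> 2"
    using eventually_hN_regime[OF \<alpha>] by (auto simp: eventually_sequentially)
  define E where "E N = exp (- (real N - 1) * (real m - 1) * KL_half \<alpha>)" for N :: nat
  define c where "c = max (upper_const m \<alpha>) (exp (real N0 * (real m - 1) * KL_half \<alpha>))"
  have "hN m m N \<alpha> \<le> c * E N" if "N \<ge> 1" for N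
  proof (cases "N \<ge> N0")
    case True
    have "hN m m N \<alpha> \<le> upper_const m \<alpha> * E N"
      using hN_upper[OF m \<alpha>] N0[OF True] by (simp add: E_def)
    also have "\<dots> \<le> c * E N"
      by (intro mult_right_mono) (auto simp: c_def E_def)
    finally show ?thesis .
  next
    case False
    have "0 \<le> (real N0 - real N + 1) * (real m - 1) * KL_half \<alpha>"
      using False m KL_half_nonneg[of \<alpha>] \<alpha> by (intro mult_nonneg_nonneg) auto
    then have "1 \<le> exp ((real N0 - real N + 1) * (real m - 1) * KL_half \<alpha>)"
      by simp
    also have "\<dots> = exp (real N0 * (real m - 1) * KL_half \<alpha>) * E N"
      by (simp add: E_def exp_add[symmetric] algebra_simps)
    also have "\<dots> \<le> c * E N"
      by (intro mult_right_mono) (auto simp: c_def E_def)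
    finally show ?thesis using hN_le_1[OF m that \<alpha>(1)] \<alpha>(2) by simp
  qed
  moreover have "c > 0" using upper_const_pos[OF \<alpha>] by (simp add: c_def less_max_iff_disj)
  ultimately show ?thesis unfolding E_def by blast
qed

lemma floor_fraction_tendsto:
  assumes "\<alpha> > 0"
  shows "(\<lambda>N. real (nat \<lfloor>real N * \<alpha>\<rfloor> - 1) / real N) \<longlonglongrightarrow> \<alpha>"
proof (rule tendsto_sandwich[of "\<lambda>N. \<alpha> - 2 / real N" _ _ "\<lambda>N. \<alpha>"])
  have large: "eventually (\<lambda>N. 2 / \<alpha> \<le> real N) sequentially"
    using filterlim_real_sequentially by (simp add: filterlim_at_top)
  then have "eventually (\<lambda>N. real N * \<alpha> - 2 \<le> real (nat \<lfloor>real N * \<alpha>\<rfloor> - 1)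
      \<and> real (nat \<lfloor>real N * \<alpha>\<rfloor> - 1) \<le> real N * \<alpha> \<and> real N > 0) sequentially"
  proof eventually_elim
    case (elim N)
    moreover have "0 < 2 / \<alpha>" using assms by simp
    ultimately have "real N > 0" by linarith
    moreover have "real N * \<alpha> \<ge> 2" using elim assms by (simp add: field_simps)
    ultimately show ?case by linarith
  qed
  then show "eventually (\<lambda>N. \<alpha> - 2 / real N \<le> real (nat \<lfloor>real N * \<alpha>\<rfloor> - 1) / real N) sequentially"
    and "eventually (\<lambda>N. real (nat \<lfloor>real N * \<alpha>\<rfloor> - 1) / real N \<le> \<alpha>) sequentially"
    by (auto elim!: eventually_mono simp: field_simps)
  show "(\<lambda>N. \<alpha> - 2 / real N) \<longlonglongrightarrow> \<alpha>"
    using tendsto_diff[OF tendsto_const lim_const_over_n[of 2]] by simp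
qed simp

lemma hN_log_limit:
  assumes m: "m > 1" and \<alpha>: "0 < \<alpha>" "\<alpha> < 1/2"
  shows "(\<lambda>N. ln (hN m m N \<alpha>) / real N) \<longlonglongrightarrow> - (real m - 1) * KL_half \<alpha>"
proof -
  define q where "q N = real (nat \<lfloor>real N * \<alpha>\<rfloor> - 1) / real N" for N :: nat
  define L where "L N = - (real m - 1) * KL_half (q N) - ln (real N) / real N" for N :: nat
  define U where "U N = (ln (upper_const m \<alpha>) + (real m - 1) * KL_half \<alpha>) / real N
                         - (real m - 1) * KL_half \<alpha>" for N :: nat
  have KL_q: "(\<lambda>N. KL_half (q N)) \<longlonglongrightarrow> KL_half \<alpha>"
    unfolding KL_half_def bin_entropy_def q_def using \<alpha>
    by (intro tendsto_intros floor_fraction_tendsto) auto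
  have L: "L \<longlonglongrightarrow> - (real m - 1) * KL_half \<alpha>"
    unfolding L_def
    using tendsto_diff[OF tendsto_mult[OF tendsto_const KL_q] lim_ln_over_n, of "- (real m - 1)"]
    by simp
  have U: "U \<longlonglongrightarrow> - (real m - 1) * KL_half \<alpha>"
    unfolding U_def by (auto intro!: tendsto_eq_intros) (simp add: algebra_simps)
  have "L N \<le> ln (hN m m N \<alpha>) / real N \<and> ln (hN m m N \<alpha>) / real N \<le> U N"
    if N: "N \<ge> 3" "real N * (1/2 - \<alpha>) \<ge> 2" "real N * \<alpha> \<ge> 2" for N
  proof -
    have N_pos: "real N > 0" using N by simp
    have lower: "exp (- (real m - 1) * real N * KL_half (q N)) / real N \<le> hN m m N \<alpha>"
      using hN_lower[OF m \<alpha> N] by (simp add: q_def)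
    then have h_pos: "hN m m N \<alpha> > 0"
      by (smt (verit) N_pos divide_pos_pos exp_gt_zero)
    have "L N * real N \<le> ln (hN m m N \<alpha>)"
      using ln_le_cancel_iff[THEN iffD2, OF _ h_pos lower] N_pos
      by (simp add: L_def ln_div algebra_simps)
    moreover have "ln (hN m m N \<alpha>) \<le> ln (upper_const m \<alpha>) - (real N - 1) * (real m - 1) * KL_half \<alpha>"
      using ln_le_cancel_iff[THEN iffD2, OF h_pos _ hN_upper[OF m \<alpha> N(1,2)]] upper_const_pos[OF \<alpha>, of m]
      by (simp add: ln_mult algebra_simps)
    moreover have "ln (upper_const m \<alpha>) - (real N - 1) * (real m - 1) * KL_half \<alpha> = U N * real N"
      using N_pos by (simp add: U_def field_simps)
    ultimately show ?thesis using N_pos by (simp add: field_simps)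
  qed
  then show ?thesis
    using eventually_hN_regime[OF \<alpha>]
    by (intro tendsto_sandwich[OF _ _ L U]) (auto elim!: eventually_mono)
qed

theorem theorem1:
  fixes m :: nat
  assumes "m > 1"
  shows "(\<forall>N::nat. N \<ge> 1 \<longrightarrow> (\<forall>i\<le>N.
            absorb_prob m m N i =
              (\<Sum>k<i. real ((N - 1) choose k) ^ (m - 1)) /
              (\<Sum>k<N. real ((N - 1) choose k) ^ (m - 1))))
       \<and> (\<forall>\<alpha>::real. 0 < \<alpha> \<and> \<alpha> < 1/2 \<longrightarrow>
            (\<exists>c>0. \<forall>N::nat. N \<ge> 1 \<longrightarrow>
               hN m m N \<alpha> \<le> c * exp (- (real N - 1) * (real m - 1) * KL_half \<alpha>)))
       \<and> (\<forall>\<alpha>::real. 0 < \<alpha> \<and> \<alpha> < 1/2 \<longrightarrow>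
            ((\<lambda>N::nat. ln (hN m m N \<alpha>) / real N) \<longlongrightarrow> - (real m - 1) * KL_half \<alpha>) at_top)"
  using absorb_prob_self[OF assms] hN_exp_bound[OF assms] hN_log_limit[OF assms]
  by (auto simp: absorb_formula_def choose_pow_sum_def)

end
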